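(* Let $a,b\in\mathbb{Z}$ with $\gcd(a,b)=1$, and let $t$ be a positive integer. Then $$\#\{(x,y)\in \mathbb Z^2:\ ax+by\in [1,t(a^2+b^2)-1] \text{ and } ay-bx \in [1,t(a^2+b^2)-1] \}=(a^2+b^2)t^2-2t+1.$$
   Context: Here $[m,M]$ denotes the closed real interval, so the conditions say $1\le ax+by\le t(a^2+b^2)-1$ and $1\le ay-bx\le t(a^2+b^2)-1$. *)

theory Defs
  imports Main
begin

end

theory Submission
  imports Defs "HOL-Number_Theory.Cong"
begin

text \<open>With \<open>n = a\<^sup>2 + b\<^sup>2\<close>, the map \<open>(x, y) \<mapsto> (a x + b y, a y - b x)\<close> is multiplication by
  \<open>a - b i\<close> on the Gaussian integers. It is injective, and for coprime \<open>a, b\<close> its image is the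
  lattice of all \<open>(u, v)\<close> with \<open>b v \<equiv> a u (mod n)\<close>. So we count lattice points in the square
  \<open>[1, N]\<^sup>2\<close> with \<open>N = t n - 1\<close>: since \<open>b\<close> is invertible mod \<open>n\<close>, each column \<open>u\<close> fixes one residue
  class of \<open>v\<close>, which meets \<open>[1, N]\<close> in \<open>t\<close> points, or \<open>t - 1\<close> when the class is \<open>0\<close>, i.e. when
  \<open>n dvd u\<close>. This happens for \<open>t - 1\<close> columns, giving \<open>N t - (t - 1)\<close>.\<close>

lemma card_cong_atLeastLessThan:
  fixes n t r :: int
  assumes "n > 0" and "t \<ge> 0"
  shows "card {v \<in> {0..<t * n}. [v = r] (mod n)} = nat t"
proof -
  have "{v \<in> {0..<t * n}. [v = r] (mod n)} = (\<lambda>k. k * n + r mod n) ` {0..<t}"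
  proof (intro set_eqI iffI)
    fix v assume v: "v \<in> {v \<in> {0..<t * n}. [v = r] (mod n)}"
    then have v_eq: "v = v div n * n + r mod n"
      by (metis cong_def div_mult_mod_eq mem_Collect_eq)
    have "v div n * n \<le> v"
      using \<open>n > 0\<close> div_mult_mod_eq[of v n] pos_mod_sign[of n v] by linarith
    with v have "v div n * n < t * n"
      by simp
    then have "v div n \<in> {0..<t}"
      using v \<open>n > 0\<close> by (simp add: pos_imp_zdiv_nonneg_iff)
    with v_eq show "v \<in> (\<lambda>k. k * n + r mod n) ` {0..<t}" by blast
  next
    fix v assume "v \<in> (\<lambda>k. k * n + r mod n) ` {0..<t}"
    then obtain k where k: "0 \<le> k" "k + 1 \<le> t" "v = k * n + r mod n" by auto
    have "(k + 1) * n \<le> t * n" and "0 \<le> k * n"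
      using k assms by (auto intro: mult_right_mono)
    moreover have "0 \<le> r mod n" and "r mod n < n"
      using assms by simp_all
    ultimately show "v \<in> {v \<in> {0..<t * n}. [v = r] (mod n)}"
      using k by (auto simp: cong_def distrib_right)
  qed
  moreover have "inj_on (\<lambda>k. k * n + r mod n) {0..<t}"
    using assms by (intro inj_onI) simp
  ultimately show ?thesis by (simp add: card_image)
qed

lemma card_cong_interval:
  fixes n t r :: int
  assumes "n > 0" and "t > 0"
  shows "int (card {v \<in> {1..t * n - 1}. [v = r] (mod n)}) = t - (if n dvd r then 1 else 0)"
proof -
  let ?A = "{v \<in> {0..<t * n}. [v = r] (mod n)}"
  have "{v \<in> {1..t * n - 1}. [v = r] (mod n)} = ?A - {0}"
    by auto
  moreover have "0 \<in> ?A \<longleftrightarrow> n dvd r"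
    using assms by (auto simp: cong_def dvd_eq_mod_eq_0)
  ultimately show ?thesis
    using card_cong_atLeastLessThan[of n t r] assms by (simp add: card_Diff_singleton_if)
qed

lemma card_linear_cong_interval:
  fixes n t b w :: int
  assumes "n > 0" and "t > 0" and "coprime b n"
  shows "int (card {v \<in> {1..t * n - 1}. [b * v = w] (mod n)}) = t - (if n dvd w then 1 else 0)"
proof -
  obtain s where s: "[b * s = 1] (mod n)"
    using cong_solve_coprime_int[OF \<open>coprime b n\<close>] by blast
  have ws: "[b * (w * s) = w] (mod n)"
    using cong_scalar_left[OF s, of w] by (simp add: ac_simps)
  have "[b * v = w] (mod n) \<longleftrightarrow> [v = w * s] (mod n)" for v
  proof -
    have "[b * v = w] (mod n) \<longleftrightarrow> [b * v = b * (w * s)] (mod n)"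
      using ws cong_trans cong_sym by meson
    also have "\<dots> \<longleftrightarrow> [v = w * s] (mod n)"
      using \<open>coprime b n\<close> by (rule cong_mult_lcancel)
    finally show ?thesis .
  qed
  moreover have "n dvd w * s \<longleftrightarrow> n dvd w"
  proof -
    have "n dvd w * s \<longleftrightarrow> [b * (w * s) = b * 0] (mod n)"
      using \<open>coprime b n\<close> by (simp only: cong_mult_lcancel cong_0_iff)
    also have "\<dots> \<longleftrightarrow> n dvd w"
      using ws cong_0_iff cong_trans cong_sym by (metis mult_zero_right)
    finally show ?thesis .
  qed
  ultimately show ?thesis
    using card_cong_interval[OF assms(1,2), of "w * s"] by simp
qed

lemma card_cong_lattice_square:
  fixes n t a b :: int
  assumes "n > 0" and "t > 0" and "coprime a n" and "coprime b n"
  shows "int (card (SIGMA u:{1..t * n - 1}. {v \<in> {1..t * n - 1}. [b * v = a * u] (mod n)}))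
           = n * t^2 - 2 * t + 1"
proof -
  let ?N = "t * n - 1"
  have row: "int (card {v \<in> {1..?N}. [b * v = a * u] (mod n)}) = t - (if n dvd u then 1 else 0)"
    for u
    using card_linear_cong_interval[OF assms(1,2,4), of "a * u"] assms(3)
    by (simp add: coprime_commute coprime_dvd_mult_right_iff)
  have "int (card (SIGMA u:{1..?N}. {v \<in> {1..?N}. [b * v = a * u] (mod n)}))
          = (\<Sum>u\<in>{1..?N}. int (card {v \<in> {1..?N}. [b * v = a * u] (mod n)}))"
    by (subst card_SigmaI) (auto simp: of_nat_sum intro: finite_subset[of _ "{1..?N}"])
  also have "\<dots> = (\<Sum>u\<in>{1..?N}. t) - (\<Sum>u\<in>{1..?N}. if n dvd u then 1 else 0)"
    unfolding row by (rule sum_subtractf)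
  also have "(\<Sum>u\<in>{1..?N}. if n dvd u then 1 else 0) = int (card {u \<in> {1..?N}. [1 * u = 0] (mod n)})"
    by (simp add: sum.If_cases Int_def cong_0_iff)
  also have "\<dots> = t - 1"
    using card_linear_cong_interval[OF assms(1,2), of 1 0] by simp
  also have "(\<Sum>u\<in>{1..?N}. t) = ?N * t"
    using assms by (simp add: mult_pos_pos)
  finally show ?thesis
    by (simp add: algebra_simps power2_eq_square)
qed

lemma coprime_sum_squares:
  fixes a b :: int
  assumes "coprime a b"
  shows "coprime a (a^2 + b^2)"
proof -
  have "gcd a (a^2 + b^2) = gcd a (b^2)"
    using gcd_add_mult[of a a "b^2"] by (simp add: power2_eq_square add.commute)
  then show ?thesis
    using assms by (simp add: coprime_iff_gcd_eq_1[symmetric])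
qed

lemma gaussian_map_inj:
  fixes a b :: int
  assumes "a^2 + b^2 \<noteq> 0"
  shows "inj (\<lambda>(x, y). (a * x + b * y, a * y - b * x))"
proof (rule injI, clarify)
  fix x y x' y' :: int
  assume u: "a * x + b * y = a * x' + b * y'" and v: "a * y - b * x = a * y' - b * x'"
  have "(a^2 + b^2) * x = a * (a * x + b * y) - b * (a * y - b * x)"
    and "(a^2 + b^2) * y = b * (a * x + b * y) + a * (a * y - b * x)"
    and "(a^2 + b^2) * x' = a * (a * x' + b * y') - b * (a * y' - b * x')"
    and "(a^2 + b^2) * y' = b * (a * x' + b * y') + a * (a * y' - b * x')"
    by (simp_all add: algebra_simps power2_eq_square)
  then have "(a^2 + b^2) * x = (a^2 + b^2) * x'" and "(a^2 + b^2) * y = (a^2 + b^2) * y'"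
    by (simp_all only: u v)
  with assms show "x = x' \<and> y = y'"
    by simp
qed

lemma gaussian_map_range:
  fixes a b :: int
  assumes "coprime a b"
  shows "range (\<lambda>(x, y). (a * x + b * y, a * y - b * x)) = {(u, v). [b * v = a * u] (mod a^2 + b^2)}"
proof (intro equalityI subsetI; clarify)
  let ?n = "a^2 + b^2"
  fix x y :: int
  have "a * (a * x + b * y) - b * (a * y - b * x) = ?n * x"
    by (simp add: algebra_simps power2_eq_square)
  then show "[b * (a * y - b * x) = a * (a * x + b * y)] (mod ?n)"
    by (metis cong_iff_dvd_diff cong_sym dvd_triv_left)
next
  let ?n = "a^2 + b^2"
  fix u v :: int
  assume "[b * v = a * u] (mod ?n)"
  then obtain x where x: "a * u - b * v = ?n * x"
    by (metis cong_iff_dvd_diff cong_sym dvdE)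
  have "b * (b * u + a * v) = ?n * (u - a * x)"
    using x by (simp add: algebra_simps power2_eq_square)
  moreover have "coprime b ?n"
    using coprime_sum_squares[of b a] assms by (simp add: coprime_commute add.commute)
  ultimately have "?n dvd b * u + a * v"
    by (metis coprime_commute coprime_dvd_mult_right_iff dvd_triv_left)
  then obtain y where y: "b * u + a * v = ?n * y"
    by (elim dvdE)
  have "?n \<noteq> 0"
    using assms by (auto simp: sum_power2_eq_zero_iff)
  moreover have "?n * (a * x + b * y) = ?n * u" and "?n * (a * y - b * x) = ?n * v"
    using x y unfolding power2_eq_square by algebra+
  ultimately have "(u, v) = (a * x + b * y, a * y - b * x)"
    by simp
  then show "(u, v) \<in> range (\<lambda>(x, y). (a * x + b * y, a * y - b * x))"
    by auto
qed

theorem proposition2p1: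
  fixes a b t :: int
  assumes "gcd a b = 1" and "t > 0"
  shows "int (card {(x::int, y::int).
            1 \<le> a * x + b * y \<and> a * x + b * y \<le> t * (a^2 + b^2) - 1 \<and>
            1 \<le> a * y - b * x \<and> a * y - b * x \<le> t * (a^2 + b^2) - 1})
         = (a^2 + b^2) * t^2 - 2 * t + 1"
proof -
  define n where "n = a^2 + b^2"
  define f where "f = (\<lambda>(x::int, y::int). (a * x + b * y, a * y - b * x))"
  have "coprime a b"
    using assms(1) by (simp add: coprime_iff_gcd_eq_1)
  then have "coprime a n" and "coprime b n" and "n > 0"
    using coprime_sum_squares[of a b] coprime_sum_squares[of b a]
    by (auto simp: n_def coprime_commute add.commute sum_power2_gt_zero_iff)
  let ?box = "{1..t * n - 1} \<times> {1..t * n - 1}"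
  have "{(x, y). 1 \<le> a * x + b * y \<and> a * x + b * y \<le> t * (a^2 + b^2) - 1 \<and>
            1 \<le> a * y - b * x \<and> a * y - b * x \<le> t * (a^2 + b^2) - 1} = f -` ?box"
    by (auto simp: f_def n_def)
  moreover have "inj f"
    using \<open>n > 0\<close> gaussian_map_inj[of a b] by (simp add: f_def n_def)
  then have "card (f -` ?box) = card (?box \<inter> range f)"
    by (metis card_image image_vimage_eq inj_on_subset subset_UNIV)
  moreover have "?box \<inter> range f = (SIGMA u:{1..t * n - 1}. {v \<in> {1..t * n - 1}. [b * v = a * u] (mod n)})"
    using gaussian_map_range[OF \<open>coprime a b\<close>] by (auto simp: f_def n_def)
  ultimately show ?thesis
    using card_cong_lattice_square[OF \<open>n > 0\<close> assms(2) \<open>coprime a n\<close> \<open>coprime b n\<close>]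
    by (simp add: n_def mult.commute)
qed

end
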